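(* Let $G$ be a finite simple graph with initial configuration $c_0:V(G)\to\mathbb{Z}$, and $(c_t)_{t\ge0}$ the configurations of the diffusion process. If there exists a constant $M$ such that $|c_t(u)-c_t(v)|\leq M$ for all adjacent $u,v$ and all $t\geq 0$, then the chip configurations are eventually periodic.
   Context: Diffusion process: $c_{t+1}(u)=c_t(u)-|\{w\in N(u): c_t(u)>c_t(w)\}|+|\{w\in N(u): c_t(u)<c_t(w)\}|$ for all $u$ simultaneously. Eventually periodic means there exist $t\ge0$, $p\ge1$ with $c_{t+p}=c_t$. *)

theory Defs
  imports Main
begin

definition simple_graph :: "'a set \<Rightarrow> ('a \<Rightarrow> 'a \<Rightarrow> bool) \<Rightarrow> bool" where
  "simple_graph V E \<longleftrightarrow> finite V \<and> (\<forall>u v. E u v \<longrightarrow> u \<in> V \<and> v \<in> V)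
     \<and> (\<forall>u v. E u v \<longrightarrow> E v u) \<and> (\<forall>u. \<not> E u u)"

definition nbhd :: "'a set \<Rightarrow> ('a \<Rightarrow> 'a \<Rightarrow> bool) \<Rightarrow> 'a \<Rightarrow> 'a set" where
  "nbhd V E u = {w \<in> V. E u w}"

definition diffusion_step :: "'a set \<Rightarrow> ('a \<Rightarrow> 'a \<Rightarrow> bool) \<Rightarrow> ('a \<Rightarrow> int) \<Rightarrow> ('a \<Rightarrow> int)" where
  "diffusion_step V E c = (\<lambda>u. if u \<in> V then
       c u - int (card {w \<in> nbhd V E u. c u > c w}) + int (card {w \<in> nbhd V E u. c u < c w})
     else c u)"

definition config :: "'a set \<Rightarrow> ('a \<Rightarrow> 'a \<Rightarrow> bool) \<Rightarrow> ('a \<Rightarrow> int) \<Rightarrow> nat \<Rightarrow> ('a \<Rightarrow> int)" where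
  "config V E c0 t = (diffusion_step V E ^^ t) c0"

definition eventually_periodic :: "(nat \<Rightarrow> ('a \<Rightarrow> int)) \<Rightarrow> bool" where
  "eventually_periodic c \<longleftrightarrow> (\<exists>t p. p \<ge> 1 \<and> c (t + p) = c t)"

end

theory Submission
  imports Defs
begin

text \<open>The diffusion process moves no chips across the boundary of a set of vertices closed
  under adjacency, so the total number of chips on each connected component is conserved.
  Along a path of length n in that component the chip numbers differ by at most M n, hence the
  conserved total pins every chip number into a fixed interval. So only finitely many
  configurations occur, and by pigeonhole some configuration repeats.\<close>

lemma diffusion_step_eq_sum_sgn:
  assumes "finite V" "x \<in> V"
  shows "diffusion_step V E c x = c x + (\<Sum>w\<in>nbhd V E x. sgn (c w - c x))"
proof -
  have "(\<Sum>w\<in>nbhd V E x. sgn (c w - c x)) =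
      (\<Sum>w\<in>nbhd V E x. (if c x < c w then 1 else 0) - (if c x > c w then 1 else 0))"
    by (rule sum.cong) (auto simp: sgn_if)
  also have "\<dots> = int (card {w \<in> nbhd V E x. c x < c w}) - int (card {w \<in> nbhd V E x. c x > c w})"
    using assms by (simp add: nbhd_def sum_subtractf sum.inter_filter[symmetric])
  finally show ?thesis
    using assms by (simp add: diffusion_step_def)
qed

lemma sum_diffusion_step_closed:
  assumes "simple_graph V E" and "C \<subseteq> V" and closed: "\<And>x w. x \<in> C \<Longrightarrow> E x w \<Longrightarrow> w \<in> C"
  shows "sum (diffusion_step V E c) C = sum c C"
proof -
  have "finite V" and sym: "\<And>x w. E x w \<Longrightarrow> E w x"
    using assms(1) by (simp_all add: simple_graph_def)
  then have "finite C"
    using assms(2) finite_subset by blast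
  define flow where "flow = (\<lambda>x w. if E x w then sgn (c w - c x) else (0::int))"
  have nbhd_sum: "(\<Sum>w\<in>nbhd V E x. sgn (c w - c x)) = (\<Sum>w\<in>C. flow x w)" if "x \<in> C" for x
  proof -
    have "nbhd V E x = {w\<in>C. E x w}"
      using that closed assms(2) by (auto simp: nbhd_def)
    then show ?thesis
      using \<open>finite C\<close> by (simp add: flow_def sum.inter_filter)
  qed
  define S where "S = (\<Sum>x\<in>C. \<Sum>w\<in>C. flow x w)"
  have "S = (\<Sum>w\<in>C. \<Sum>x\<in>C. flow x w)"
    unfolding S_def by (rule sum.swap)
  also have "\<dots> = (\<Sum>w\<in>C. \<Sum>x\<in>C. - flow w x)"
    by (intro sum.cong refl) (auto simp: flow_def sgn_if dest: sym)
  also have "\<dots> = - S"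
    by (simp add: S_def sum_negf)
  finally have "S = 0"
    by simp
  have "sum (diffusion_step V E c) C = (\<Sum>x\<in>C. c x + (\<Sum>w\<in>C. flow x w))"
    using assms(2) \<open>finite V\<close> by (intro sum.cong refl) (auto simp: diffusion_step_eq_sum_sgn nbhd_sum)
  also have "\<dots> = sum c C + S"
    by (simp add: sum.distrib S_def)
  finally show ?thesis
    using \<open>S = 0\<close> by simp
qed

lemma config_Suc: "config V E c0 (Suc t) = diffusion_step V E (config V E c0 t)"
  by (simp add: config_def)

lemma config_notin: "u \<notin> V \<Longrightarrow> config V E c0 t u = c0 u"
  by (induction t) (simp_all add: config_def diffusion_step_def)

lemma sum_config_closed:
  assumes "simple_graph V E" and "C \<subseteq> V" and "\<And>x w. x \<in> C \<Longrightarrow> E x w \<Longrightarrow> w \<in> C"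
  shows "sum (config V E c0 t) C = sum c0 C"
  by (induction t) (simp_all add: config_def sum_diffusion_step_closed[OF assms])

lemma abs_diff_le_relpowp:
  assumes "\<And>u v. E u v \<Longrightarrow> \<bar>f u - f v\<bar> \<le> (M::int)" and "(E ^^ n) u w"
  shows "\<bar>f u - f w\<bar> \<le> M * int n"
  using assms(2)
proof (induction n arbitrary: w)
  case (Suc n)
  then obtain y where "(E ^^ n) u y" "E y w"
    by (auto elim: relpowp_Suc_E)
  then have "\<bar>f u - f y\<bar> \<le> M * int n" "\<bar>f y - f w\<bar> \<le> M"
    using Suc.IH assms(1) by blast+
  then show ?case
    by (simp add: algebra_simps)
qed simp

lemma abs_le_abs_sum_plus_sum_abs_diff:
  fixes f :: "'a \<Rightarrow> int"
  assumes "finite C" "u \<in> C"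
  shows "\<bar>f u\<bar> \<le> \<bar>sum f C\<bar> + (\<Sum>w\<in>C. \<bar>f u - f w\<bar>)"
proof -
  have "card C \<ge> 1"
    using assms by (auto simp: Suc_le_eq card_gt_0_iff)
  have "\<bar>int (card C) * f u\<bar> = \<bar>sum f C + (\<Sum>w\<in>C. f u - f w)\<bar>"
    by (simp add: sum_subtractf)
  also have "\<dots> \<le> \<bar>sum f C\<bar> + \<bar>\<Sum>w\<in>C. f u - f w\<bar>"
    by (rule abs_triangle_ineq)
  also have "\<dots> \<le> \<bar>sum f C\<bar> + (\<Sum>w\<in>C. \<bar>f u - f w\<bar>)"
    using sum_abs by (rule add_left_mono)
  finally have "\<bar>int (card C) * f u\<bar> \<le> \<bar>sum f C\<bar> + (\<Sum>w\<in>C. \<bar>f u - f w\<bar>)" .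
  moreover have "\<bar>f u\<bar> \<le> \<bar>int (card C) * f u\<bar>"
    using \<open>card C \<ge> 1\<close> by (simp add: abs_mult mult_le_cancel_right1)
  ultimately show ?thesis
    by linarith
qed

lemma config_bounded_at_vertex:
  assumes g: "simple_graph V E" and "u \<in> V"
    and bounded_diff: "\<forall>t u v. E u v \<longrightarrow> \<bar>config V E c0 t u - config V E c0 t v\<bar> \<le> M"
  shows "\<exists>K. \<forall>t. \<bar>config V E c0 t u\<bar> \<le> K"
proof -
  have "finite V" and in_V: "\<And>x w. E x w \<Longrightarrow> w \<in> V"
    using g by (simp_all add: simple_graph_def)
  define C where "C = {w. E\<^sup>*\<^sup>* u w}"
  have "C \<subseteq> V"
  proof
    fix w assume "w \<in> C"
    then have "E\<^sup>*\<^sup>* u w"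
      by (simp add: C_def)
    then show "w \<in> V"
      by (induction rule: rtranclp_induct) (auto simp: \<open>u \<in> V\<close> dest: in_V)
  qed
  then have "finite C"
    using \<open>finite V\<close> finite_subset by blast
  have closed: "\<And>x w. x \<in> C \<Longrightarrow> E x w \<Longrightarrow> w \<in> C"
    by (auto simp: C_def)
  have "\<forall>w\<in>C. \<exists>n. (E ^^ n) u w"
    by (simp add: C_def rtranclp_power)
  then obtain dist where dist: "\<And>w. w \<in> C \<Longrightarrow> (E ^^ dist w) u w"
    by metis
  have "\<bar>config V E c0 t u\<bar> \<le> \<bar>sum c0 C\<bar> + (\<Sum>w\<in>C. M * int (dist w))" for t
  proof -
    have "\<bar>config V E c0 t u\<bar> \<le> \<bar>sum (config V E c0 t) C\<bar> + (\<Sum>w\<in>C. \<bar>config V E c0 t u - config V E c0 t w\<bar>)"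
      using \<open>finite C\<close> by (rule abs_le_abs_sum_plus_sum_abs_diff) (simp add: C_def)
    also have "\<dots> \<le> \<bar>sum c0 C\<bar> + (\<Sum>w\<in>C. M * int (dist w))"
    proof -
      have "\<bar>config V E c0 t u - config V E c0 t w\<bar> \<le> M * int (dist w)" if "w \<in> C" for w
        using bounded_diff dist[OF that] by (intro abs_diff_le_relpowp) auto
      then show ?thesis
        by (simp add: sum_config_closed[OF g \<open>C \<subseteq> V\<close> closed] sum_mono)
    qed
    finally show ?thesis .
  qed
  then show ?thesis
    by blast
qed

lemma uniform_bound_finite:
  fixes f :: "nat \<Rightarrow> 'a \<Rightarrow> int"
  assumes "finite V" "\<And>u. u \<in> V \<Longrightarrow> \<exists>K. \<forall>t. \<bar>f t u\<bar> \<le> K"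
  shows "\<exists>K. \<forall>t. \<forall>u\<in>V. \<bar>f t u\<bar> \<le> K"
  using assms
proof (induction V rule: finite_induct)
  case (insert x V)
  then obtain K1 K2 where "\<forall>t. \<forall>u\<in>V. \<bar>f t u\<bar> \<le> K1" "\<forall>t. \<bar>f t x\<bar> \<le> K2"
    by blast
  then have "\<forall>t. \<forall>u\<in>insert x V. \<bar>f t u\<bar> \<le> max K1 K2"
    by (metis insert_iff max.coboundedI1 max.coboundedI2)
  then show ?case ..
qed simp

lemma finite_funs_bounded_on_fixed_off:
  assumes "finite A" "finite B"
  shows "finite {f. (\<forall>x\<in>A. f x \<in> B) \<and> (\<forall>x. x \<notin> A \<longrightarrow> f x = g x)}"
proof (rule finite_subset)
  let ?H = "{h. \<forall>x. (x \<in> A \<longrightarrow> h x \<in> B) \<and> (x \<notin> A \<longrightarrow> h x = undefined)}"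
  show "{f. (\<forall>x\<in>A. f x \<in> B) \<and> (\<forall>x. x \<notin> A \<longrightarrow> f x = g x)} \<subseteq> (\<lambda>h x. if x \<in> A then h x else g x) ` ?H"
  proof
    fix f assume f: "f \<in> {f. (\<forall>x\<in>A. f x \<in> B) \<and> (\<forall>x. x \<notin> A \<longrightarrow> f x = g x)}"
    show "f \<in> (\<lambda>h x. if x \<in> A then h x else g x) ` ?H"
    proof (rule image_eqI)
      show "(\<lambda>x. if x \<in> A then f x else undefined) \<in> ?H"
        using f by auto
    qed (use f in auto)
  qed
  show "finite ((\<lambda>h x. if x \<in> A then h x else g x) ` ?H)"
    using finite_set_of_finite_funs[OF assms] by blast
qed

lemma eventually_periodic_if_finite_range:
  assumes "finite (range c)"
  shows "eventually_periodic c"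
proof -
  have "\<not> inj c"
    using assms finite_imageD infinite_UNIV_nat by blast
  then obtain a b where "a < b" "c a = c b"
    unfolding inj_def by (metis linorder_neqE_nat)
  then show ?thesis
    unfolding eventually_periodic_def by (intro exI[of _ a] exI[of _ "b - a"]) auto
qed

theorem lemma4:
  fixes V :: "'a set" and E :: "'a \<Rightarrow> 'a \<Rightarrow> bool" and c0 :: "'a \<Rightarrow> int" and M :: int
  assumes "simple_graph V E"
    and "\<forall>t u v. E u v \<longrightarrow> \<bar>config V E c0 t u - config V E c0 t v\<bar> \<le> M"
  shows "eventually_periodic (config V E c0)"
proof (rule eventually_periodic_if_finite_range)
  have "finite V"
    using assms(1) by (simp add: simple_graph_def)
  then obtain K where K: "\<And>t u. u \<in> V \<Longrightarrow> \<bar>config V E c0 t u\<bar> \<le> K"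
    using uniform_bound_finite config_bounded_at_vertex[OF assms(1) _ assms(2)] by metis
  have "range (config V E c0) \<subseteq> {f. (\<forall>x\<in>V. f x \<in> {-K..K}) \<and> (\<forall>x. x \<notin> V \<longrightarrow> f x = c0 x)}"
    using K by (auto simp: config_notin abs_le_iff minus_le_iff)
  then show "finite (range (config V E c0))"
    using finite_funs_bounded_on_fixed_off[OF \<open>finite V\<close>, of "{-K..K}" c0] finite_subset by blast
qed

end
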